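(* Let $\mathbf A$ be a finite relational structure whose relations include three binary relations $\alpha^{\mathbf A},\beta^{\mathbf A},\gamma^{\mathbf A}$, and suppose: (a) there is a finite set $\mathcal P$ of pentagons such that for each $\mathbf P\in\mathcal P$ the domain $P$ is a subset of $A$ and $\alpha^{\mathbf P}=\alpha^{\mathbf A}\cap P^2$, $\beta^{\mathbf P}=\beta^{\mathbf A}\cap P^2$, $\gamma^{\mathbf P}=\gamma^{\mathbf A}\cap P^2$; (b) for every $k\ge1$ there is a relation $D_k\subseteq A^k$, primitive-positive definable over $\mathbf A$, such that $(a_1,\dots,a_k)\in D_k$ iff some $\mathbf P\in\mathcal P$ has all of $a_1,\dots,a_k$ in its domain. Let $\mathbf P\in\mathcal P$ be such that $\mathbb L(\mathbf P)$ is non-trivial and the domain of $\mathbf P$ is not contained in the domain of any other pentagon in $\mathcal P$. Then there is a linear reduction from $\mathsf{Pent\text{-}Eval}(\mathbf P)$ to $\exists\mathrm{CSP}(\mathbf A)$.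
   Context: For a set $X$, $\mathrm{Eq}(X)$ is the lattice of equivalence relations on $X$, with bottom $0_X$ (equality) and top $1_X=X^2$. A pentagon is a finite structure $\mathbf P$ with domain $P$ and three equivalence relations $\alpha^{\mathbf P},\beta^{\mathbf P},\gamma^{\mathbf P}$ on $P$ with $\alpha^{\mathbf P}\le\beta^{\mathbf P}$, $\beta^{\mathbf P}\wedge\gamma^{\mathbf P}=0_P$, $\beta^{\mathbf P}\circ\gamma^{\mathbf P}=1_P$, $\alpha^{\mathbf P}\vee\gamma^{\mathbf P}=1_P$ in $\mathrm{Eq}(P)$. Then $P=B_{\mathbf P}\times C_{\mathbf P}$ with $\beta^{\mathbf P},\gamma^{\mathbf P}$ the kernels of the projections onto $B_{\mathbf P}$, $C_{\mathbf P}$. For $b\in B_{\mathbf P}$, $\alpha^{\mathbf P}_b=\{(c,c')\in C_{\mathbf P}^2\mid ((b,c),(b,c'))\in\alpha^{\mathbf P}\}$; $\mathbb L(\mathbf P)$ is the sublattice of $\mathrm{Eq}(C_{\mathbf P})$ generated by all $\alpha^{\mathbf P}_b$; non-trivial means more than one element. $\mathbf P_2$ is the 2-sorted structure with sorts $B_{\mathbf P}$, $C_{\mathbf P}$ and ternary relation $R=\{(b,c,c')\mid (c,c')\in\alpha^{\mathbf P}_b\}$ (first argument of first sort, others of second sort). $\mathsf{Pent\text{-}Eval}(\mathbf P)$: instances are a primitive-positive formula $\phi(X,Y)$ over $\{R\}$ with free variables $X$ of first sort and $Y$ of second sort, and weights on $X\cup Y$ summing to 1; assignments map $X\to B_{\mathbf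 P}$, $Y\to C_{\mathbf P}$, satisfying iff $\phi$ holds in $\mathbf P_2$. $\exists\mathrm{CSP}(\mathbf A)$: instances $(V,V^\exists,\mathcal C,w)$ with constraints using relations of $\mathbf A$ on free variables $V$ and existential variables $V^\exists$, weights on $V$ summing to 1; $f:V\to A$ satisfying iff it extends to a satisfying assignment. $\mathrm{dist}_{\mathcal I}(f)$ is the minimum weight of free variables on which $f$ differs from a satisfying assignment. A linear reduction from $\mathcal P$ to $\mathcal P'$: given $(\mathcal I,f)$ with $\mathcal I$ on variable set $V$, it (possibly randomly) produces $(\mathcal I',f')$ with $|V'|=O(|V|)$ such that (i) $f$ satisfying implies $f'$ satisfying; (ii) for a constant $c_1>0$ and every $\epsilon\in(0,1)$, $\mathrm{dist}_{\mathcal I}(f)\ge\epsilon$ implies $\Pr[\mathrm{dist}_{\mathcal I'}(f')\ge c_1\epsilon]\ge 9/10$; (iii) each value of $f'$ is computable with $O(1)$ queries to $f$. *)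

theory Defs
  imports "HOL-Probability.Probability_Mass_Function"
begin

text \<open>A relational structure with universe the (finite) type 'a: relation symbols of type 'r,
  arity ar, interpretation rel.  A binary relation symbol s gives the binary relation binrel.\<close>

definition binrel :: "('r \<Rightarrow> 'a list set) \<Rightarrow> 'r \<Rightarrow> 'a rel" where
  "binrel rel s = {(x, y). [x, y] \<in> rel s}"

definition pp_definable ::
  "('r \<Rightarrow> 'a list set) \<Rightarrow> ('r \<Rightarrow> nat) \<Rightarrow> nat \<Rightarrow> 'a list set \<Rightarrow> bool" where
  "pp_definable rel ar k D \<longleftrightarrow>
     (\<exists>(E::nat set) (cons :: ('r \<times> nat list) list) (eqs :: (nat \<times> nat) list).
        finite E \<and> E \<inter> {0..<k} = {} \<and>
        (\<forall>(r, xs) \<in> set cons. length xs = ar r \<and> set xs \<subseteq> {0..<k} \<union> E) \<and>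
        (\<forall>(u, v) \<in> set eqs. u \<in> {0..<k} \<union> E \<and> v \<in> {0..<k} \<union> E) \<and>
        (\<forall>as. length as = k \<longrightarrow>
           (as \<in> D \<longleftrightarrow>
             (\<exists>g :: nat \<Rightarrow> 'a. (\<forall>i<k. g i = as ! i) \<and>
                 (\<forall>(r, xs) \<in> set cons. map g xs \<in> rel r) \<and>
                 (\<forall>(u, v) \<in> set eqs. g u = g v)))))"

record 'r csp_inst =
  cvars :: "nat set"
  cevars :: "nat set"
  ccons :: "('r \<times> nat list) list"
  cweight :: "nat \<Rightarrow> real"

definition csp_wf :: "('r \<Rightarrow> nat) \<Rightarrow> 'r csp_inst \<Rightarrow> bool" where
  "csp_wf ar I \<longleftrightarrow> finite (cvars I) \<and> finite (cevars I) \<and> cvars I \<inter> cevars I = {} \<and>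
     (\<forall>(r, xs) \<in> set (ccons I). length xs = ar r \<and> set xs \<subseteq> cvars I \<union> cevars I) \<and>
     (\<forall>v \<in> cvars I. 0 \<le> cweight I v) \<and> (\<Sum>v\<in>cvars I. cweight I v) = 1"

definition csp_sat :: "('r \<Rightarrow> 'a list set) \<Rightarrow> 'r csp_inst \<Rightarrow> (nat \<Rightarrow> 'a) \<Rightarrow> bool" where
  "csp_sat rel I f \<longleftrightarrow>
     (\<exists>g. (\<forall>v \<in> cvars I. g v = f v) \<and> (\<forall>(r, xs) \<in> set (ccons I). map g xs \<in> rel r))"

text \<open>Weighted distance to the set of satisfying assignments (infinite if there is none).\<close>

definition wdist :: "'v set \<Rightarrow> ('v \<Rightarrow> real) \<Rightarrow> ('v \<Rightarrow> 'x) set \<Rightarrow> ('v \<Rightarrow> 'x) \<Rightarrow> ereal" where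
  "wdist V w S f = (INF g\<in>S. ereal (\<Sum>v \<in> {v\<in>V. f v \<noteq> g v}. w v))"

definition csp_dist :: "('r \<Rightarrow> 'a list set) \<Rightarrow> 'r csp_inst \<Rightarrow> (nat \<Rightarrow> 'a) \<Rightarrow> ereal" where
  "csp_dist rel I f = wdist (cvars I) (cweight I) {g. csp_sat rel I g} f"

definition is_pentagon :: "'a set \<Rightarrow> 'a rel \<Rightarrow> 'a rel \<Rightarrow> 'a rel \<Rightarrow> bool" where
  "is_pentagon P a b c \<longleftrightarrow> finite P \<and> equiv P a \<and> equiv P b \<and> equiv P c \<and>
     a \<subseteq> b \<and> b \<inter> c = Id_on P \<and> b O c = P \<times> P \<and> (a \<union> c)\<^sup>+ = P \<times> P"

text \<open>P = B x C with B = P/beta (first coordinate) and C = P/gamma (second coordinate);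
  the point (bb, cc) of B x C is the unique element of bb \<inter> cc.\<close>

definition pent_B :: "'a set \<Rightarrow> 'a rel \<Rightarrow> 'a set set" where
  "pent_B P b = P // b"

definition pent_C :: "'a set \<Rightarrow> 'a rel \<Rightarrow> 'a set set" where
  "pent_C P c = P // c"

definition pent_alpha :: "'a set \<Rightarrow> 'a rel \<Rightarrow> 'a rel \<Rightarrow> 'a set \<Rightarrow> 'a set rel" where
  "pent_alpha P a c bb = {(x, y). x \<in> pent_C P c \<and> y \<in> pent_C P c \<and>
       (\<exists>p \<in> bb \<inter> x. \<exists>p' \<in> bb \<inter> y. (p, p') \<in> a)}"

inductive_set gen_sublattice :: "'c rel set \<Rightarrow> 'c rel set" for G where
  gen: "x \<in> G \<Longrightarrow> x \<in> gen_sublattice G"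
| meet: "x \<in> gen_sublattice G \<Longrightarrow> y \<in> gen_sublattice G \<Longrightarrow> x \<inter> y \<in> gen_sublattice G"
| join: "x \<in> gen_sublattice G \<Longrightarrow> y \<in> gen_sublattice G \<Longrightarrow> (x \<union> y)\<^sup>+ \<in> gen_sublattice G"

definition pent_L :: "'a set \<Rightarrow> 'a rel \<Rightarrow> 'a rel \<Rightarrow> 'a rel \<Rightarrow> 'a set rel set" where
  "pent_L P a b c = gen_sublattice {pent_alpha P a c bb | bb. bb \<in> pent_B P b}"

definition nontrivial :: "'x set \<Rightarrow> bool" where
  "nontrivial L \<longleftrightarrow> (\<exists>x\<in>L. \<exists>y\<in>L. x \<noteq> y)"

definition pent_R :: "'a set \<Rightarrow> 'a rel \<Rightarrow> 'a rel \<Rightarrow> 'a rel \<Rightarrow> ('a set \<times> 'a set \<times> 'a set) set" where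
  "pent_R P a b c = {(bb, x, y). bb \<in> pent_B P b \<and> (x, y) \<in> pent_alpha P a c bb}"

text \<open>A pp-formula over {R}: free variables of the first sort (pX) and second sort (pY),
  existential variables of the first (pEX) and second (pEY) sort, R-atoms and equality atoms,
  and weights on the free variables.  Values of both sorts are represented as 'a set
  (beta-classes resp. gamma-classes).\<close>

record pent_inst =
  pX :: "nat set"
  pY :: "nat set"
  pEX :: "nat set"
  pEY :: "nat set"
  patoms :: "(nat \<times> nat \<times> nat) list"
  peqs :: "(nat \<times> nat) list"
  pweight :: "nat \<Rightarrow> real"

definition pent_vars :: "pent_inst \<Rightarrow> nat set" where
  "pent_vars I = pX I \<union> pY I"

definition pent_wf :: "pent_inst \<Rightarrow> bool" where
  "pent_wf I \<longleftrightarrow> finite (pX I) \<and> finite (pY I) \<and> finite (pEX I) \<and> finite (pEY I) \<and>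
     pX I \<inter> pY I = {} \<and> pX I \<inter> pEX I = {} \<and> pX I \<inter> pEY I = {} \<and>
     pY I \<inter> pEX I = {} \<and> pY I \<inter> pEY I = {} \<and> pEX I \<inter> pEY I = {} \<and>
     (\<forall>(u, v, v') \<in> set (patoms I). u \<in> pX I \<union> pEX I \<and> v \<in> pY I \<union> pEY I \<and> v' \<in> pY I \<union> pEY I) \<and>
     (\<forall>(u, v) \<in> set (peqs I). (u \<in> pX I \<union> pEX I \<and> v \<in> pX I \<union> pEX I) \<or>
                                (u \<in> pY I \<union> pEY I \<and> v \<in> pY I \<union> pEY I)) \<and>
     (\<forall>v \<in> pent_vars I. 0 \<le> pweight I v) \<and> (\<Sum>v\<in>pent_vars I. pweight I v) = 1"

definition pent_assign :: "'a set \<Rightarrow> 'a rel \<Rightarrow> 'a rel \<Rightarrow> pent_inst \<Rightarrow> (nat \<Rightarrow> 'a set) \<Rightarrow> bool" where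
  "pent_assign P b c I f \<longleftrightarrow> (\<forall>v \<in> pX I. f v \<in> pent_B P b) \<and> (\<forall>v \<in> pY I. f v \<in> pent_C P c)"

definition pent_sat ::
  "'a set \<Rightarrow> 'a rel \<Rightarrow> 'a rel \<Rightarrow> 'a rel \<Rightarrow> pent_inst \<Rightarrow> (nat \<Rightarrow> 'a set) \<Rightarrow> bool" where
  "pent_sat P a b c I f \<longleftrightarrow>
     (\<exists>g. (\<forall>v \<in> pent_vars I. g v = f v) \<and>
          (\<forall>v \<in> pX I \<union> pEX I. g v \<in> pent_B P b) \<and> (\<forall>v \<in> pY I \<union> pEY I. g v \<in> pent_C P c) \<and>
          (\<forall>(u, v, v') \<in> set (patoms I). (g u, g v, g v') \<in> pent_R P a b c) \<and>
          (\<forall>(u, v) \<in> set (peqs I). g u = g v))"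

definition pent_dist ::
  "'a set \<Rightarrow> 'a rel \<Rightarrow> 'a rel \<Rightarrow> 'a rel \<Rightarrow> pent_inst \<Rightarrow> (nat \<Rightarrow> 'a set) \<Rightarrow> ereal" where
  "pent_dist P a b c I f = wdist (pent_vars I) (pweight I) {g. pent_sat P a b c I g} f"

text \<open>A problem is given by: well-formed instances (wf), the free variables
  of an instance (vars), admissible assignments (asg), satisfying assignments (sat) and the
  distance (dist).  A (randomized) reduction maps each instance I to a probability distribution
  over pairs (I', F), where I' is the produced instance and F computes f' from f; each value
  of F f depends on at most q values of f (O(1) queries).\<close>

definition linear_reduction ::
  "('i \<Rightarrow> bool) \<Rightarrow> ('i \<Rightarrow> 'v set) \<Rightarrow> ('i \<Rightarrow> ('v \<Rightarrow> 'x) \<Rightarrow> bool) \<Rightarrow>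
   ('i \<Rightarrow> ('v \<Rightarrow> 'x) \<Rightarrow> bool) \<Rightarrow> ('i \<Rightarrow> ('v \<Rightarrow> 'x) \<Rightarrow> ereal) \<Rightarrow>
   ('j \<Rightarrow> bool) \<Rightarrow> ('j \<Rightarrow> 'w set) \<Rightarrow> ('j \<Rightarrow> ('w \<Rightarrow> 'y) \<Rightarrow> bool) \<Rightarrow>
   ('j \<Rightarrow> ('w \<Rightarrow> 'y) \<Rightarrow> bool) \<Rightarrow> ('j \<Rightarrow> ('w \<Rightarrow> 'y) \<Rightarrow> ereal) \<Rightarrow> bool" where
  "linear_reduction wfi vars asg sat dst wfi' vars' asg' sat' dst' \<longleftrightarrow>
     (\<exists>(red :: 'i \<Rightarrow> ('j \<times> (('v \<Rightarrow> 'x) \<Rightarrow> ('w \<Rightarrow> 'y))) pmf) (c0::nat) (c1::real) (q::nat).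
        c1 > 0 \<and>
        (\<forall>I. wfi I \<longrightarrow>
           (\<forall>(I', F) \<in> set_pmf (red I).
               wfi' I' \<and> card (vars' I') \<le> c0 * card (vars I) \<and>
               (\<forall>v' \<in> vars' I'. \<exists>S \<subseteq> vars I. card S \<le> q \<and>
                   (\<forall>f g. (\<forall>v\<in>S. f v = g v) \<longrightarrow> F f v' = F g v')) \<and>
               (\<forall>f. asg I f \<longrightarrow> asg' I' (F f)) \<and>
               (\<forall>f. asg I f \<longrightarrow> sat I f \<longrightarrow> sat' I' (F f))) \<and>
           (\<forall>f \<epsilon>. asg I f \<longrightarrow> 0 < \<epsilon> \<longrightarrow> \<epsilon> < 1 \<longrightarrow> dst I f \<ge> ereal \<epsilon> \<longrightarrow>
               measure_pmf.prob (red I) {(I', F). dst' I' (F f) \<ge> ereal (c1 * \<epsilon>)} \<ge> 9/10)))"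

end

theory Submission
  imports Defs
begin

text \<open>The reduction is deterministic. A Pent-Eval instance becomes a CSP instance over A with a
  copy of every Pent-Eval variable (a beta- or gamma-class is represented by one of its points),
  an anchor variable for each point of P, and two witness points per R-atom, tied together by
  alpha-, beta- and gamma-constraints. The pp-definition of D_k forces all these variables into a
  single pentagon. A CSP solution that moves an anchor pays weight 1/(2n); one that keeps all
  anchors on the points of P lives in a pentagon containing P, which by maximality is P itself,
  and so decodes to a Pent-Eval solution at half the distance. Non-triviality of L(P) is only
  needed for two distinct points of P, which keep the free variables of the pp-definition apart.\<close>

section \<open>Instantiating pp-definitions\<close>

definition cons_sat :: "('r \<Rightarrow> 'a list set) \<Rightarrow> ('r \<times> nat list) list \<Rightarrow> (nat \<Rightarrow> 'a) \<Rightarrow> bool" where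
  "cons_sat rel cs g \<longleftrightarrow> (\<forall>(r, xs) \<in> set cs. map g xs \<in> rel r)"

lemma cons_sat_append [simp]: "cons_sat rel (cs @ ds) g \<longleftrightarrow> cons_sat rel cs g \<and> cons_sat rel ds g"
  unfolding cons_sat_def by auto

lemma cons_sat_concat: "cons_sat rel (concat css) g \<longleftrightarrow> (\<forall>cs \<in> set css. cons_sat rel cs g)"
  unfolding cons_sat_def by auto

lemma cons_sat_cong:
  assumes "\<And>r xs x. (r, xs) \<in> set cs \<Longrightarrow> x \<in> set xs \<Longrightarrow> g x = g' x"
  shows "cons_sat rel cs g \<longleftrightarrow> cons_sat rel cs g'"
proof -
  have eq: "map g xs = map g' xs" if "(r, xs) \<in> set cs" for r xs
    using assms that by (simp add: map_eq_conv)
  show ?thesis unfolding cons_sat_def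
    by (intro ball_cong refl) (metis (no_types, lifting) eq prod.case_eq_if prod.collapse)
qed

definition pp_encodes ::
  "('r \<Rightarrow> 'a list set) \<Rightarrow> ('r \<Rightarrow> nat) \<Rightarrow> 'a list set \<Rightarrow> nat list \<Rightarrow> ('r \<times> nat list) list \<Rightarrow> bool" where
  "pp_encodes rel ar D ts cs \<longleftrightarrow> (\<forall>(r, xs) \<in> set cs. length xs = ar r) \<and>
     (\<forall>g. cons_sat rel cs g \<longrightarrow> map g ts \<in> D) \<and>
     (\<forall>g0. map g0 ts \<in> D \<longrightarrow> (\<exists>g. (\<forall>x \<in> set ts. g x = g0 x) \<and> cons_sat rel cs g))"

lemma equivclp_imp_eq:
  assumes "equivclp r x y" "\<And>u v. r u v \<Longrightarrow> g u = g v"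
  shows "g x = g y"
  using assms(1) by induction (use assms(2) in auto)

definition canon_subst :: "(nat \<Rightarrow> nat \<Rightarrow> bool) \<Rightarrow> nat list \<Rightarrow> (nat \<Rightarrow> nat) \<Rightarrow> nat \<Rightarrow> nat" where
  "canon_subst E ts \<phi> u =
     (if \<exists>i < length ts. E u i then ts ! (LEAST i. i < length ts \<and> E u i) else \<phi> (LEAST v. E u v))"

lemma canon_subst_cong:
  assumes "equivp E" "E u v"
  shows "canon_subst E ts \<phi> u = canon_subst E ts \<phi> v"
proof -
  have "E u = E v" using assms by (meson equivp_def)
  then show ?thesis by (simp only: canon_subst_def)
qed

lemma canon_subst_free:
  assumes "equivp E" "i < length ts" and sep: "\<And>i j. i < length ts \<Longrightarrow> j < length ts \<Longrightarrow> E i j \<Longrightarrow> i = j"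
  shows "canon_subst E ts \<phi> i = ts ! i"
proof -
  have "E i i" using assms(1) by (meson equivp_reflp)
  moreover have "(LEAST j. j < length ts \<and> E i j) = i"
    by (rule Least_equality) (use assms \<open>E i i\<close> in auto)
  ultimately show ?thesis unfolding canon_subst_def using assms(2) by auto
qed

lemma canon_subst_lift:
  assumes "equivp E" and resp: "\<And>u v. E u v \<Longrightarrow> g u = g v"
    and free: "\<And>i. i < length ts \<Longrightarrow> g i = g0 (ts ! i)"
    and "inj \<phi>" "\<And>u. \<phi> u \<notin> set ts"
  shows "(\<lambda>x. if x \<in> set ts then g0 x else g (inv \<phi> x)) (canon_subst E ts \<phi> u) = g u"
proof (cases "\<exists>i < length ts. E u i")
  case True
  define i where "i = (LEAST i. i < length ts \<and> E u i)"
  have "i < length ts \<and> E u i" unfolding i_def using True by (metis (mono_tags, lifting) LeastI)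
  then have "g0 (ts ! i) = g u" using free resp by metis
  then show ?thesis using True \<open>i < length ts \<and> E u i\<close> unfolding canon_subst_def i_def[symmetric] by simp
next
  case False
  define m where "m = (LEAST v. E u v)"
  have "E u m" unfolding m_def using assms(1) by (metis LeastI equivp_reflp)
  moreover have "canon_subst E ts \<phi> u = \<phi> m" using False unfolding canon_subst_def m_def by auto
  ultimately show ?thesis using resp assms(4,5) by simp
qed

lemma cons_sat_rename: "cons_sat rel (map (\<lambda>(r, xs). (r, map \<tau> xs)) cs) G \<longleftrightarrow> cons_sat rel cs (G \<circ> \<tau>)"
  unfolding cons_sat_def by auto

lemma canon_subst_sound:
  assumes "equivp E" and eqs: "\<forall>(u, v) \<in> set eqs. E u v"
    and sep: "\<And>i j. i < length ts \<Longrightarrow> j < length ts \<Longrightarrow> E i j \<Longrightarrow> i = j"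
    and sat: "cons_sat rel (map (\<lambda>(r, xs). (r, map (canon_subst E ts \<phi>) xs)) cs) G"
  shows "\<exists>g. (\<forall>i < length ts. g i = map G ts ! i) \<and> cons_sat rel cs g \<and> (\<forall>(u, v) \<in> set eqs. g u = g v)"
proof (intro exI conjI)
  let ?g = "G \<circ> canon_subst E ts \<phi>"
  show "\<forall>i < length ts. ?g i = map G ts ! i"
    using canon_subst_free[OF \<open>equivp E\<close> _ sep] by simp
  show "cons_sat rel cs ?g" using sat by (simp add: cons_sat_rename)
  show "\<forall>(u, v) \<in> set eqs. ?g u = ?g v"
    using eqs canon_subst_cong[OF \<open>equivp E\<close>] by fastforce
qed

lemma canon_subst_complete:
  assumes "equivp E" and resp: "\<And>u v. E u v \<Longrightarrow> g u = g v"
    and free: "\<forall>i < length ts. g i = g0 (ts ! i)" and sat: "cons_sat rel cs g"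
    and fresh: "inj \<phi>" "\<And>u. \<phi> u \<notin> set ts"
  shows "\<exists>G. (\<forall>x \<in> set ts. G x = g0 x) \<and> cons_sat rel (map (\<lambda>(r, xs). (r, map (canon_subst E ts \<phi>) xs)) cs) G"
proof (intro exI conjI)
  let ?G = "\<lambda>x. if x \<in> set ts then g0 x else g (inv \<phi> x)"
  have "?G (canon_subst E ts \<phi> u) = g u" for u
    by (rule canon_subst_lift[OF \<open>equivp E\<close>]) (use resp free fresh in auto)
  then have "?G \<circ> canon_subst E ts \<phi> = g" by auto
  then show "cons_sat rel (map (\<lambda>(r, xs). (r, map (canon_subst E ts \<phi>) xs)) cs) ?G"
    using sat by (simp add: cons_sat_rename)
qed simp

text \<open>The equality atoms of the pp-definition are eliminated by substituting a canonical
  representative of each equivalence class, a free variable where possible and a fresh name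
  otherwise; this needs that no two free variables are forced equal.\<close>

lemma pp_definable_encodes:
  fixes rel :: "'r \<Rightarrow> 'a list set" and ts :: "nat list" and \<phi> :: "nat \<Rightarrow> nat"
  assumes pp: "pp_definable rel ar (length ts) D"
    and sep: "\<And>i j. i < length ts \<Longrightarrow> j < length ts \<Longrightarrow> i \<noteq> j \<Longrightarrow>
                \<exists>as \<in> D. length as = length ts \<and> as ! i \<noteq> as ! j"
    and fresh: "inj \<phi>" "\<And>u. \<phi> u \<notin> set ts"
  shows "\<exists>cs. pp_encodes rel ar D ts cs"
proof -
  obtain V :: "nat set" and cons :: "('r \<times> nat list) list" and eqs :: "(nat \<times> nat) list" where
    scope: "\<forall>(r, xs) \<in> set cons. length xs = ar r \<and> set xs \<subseteq> {0..<length ts} \<union> V" and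
    iff0: "\<forall>as. length as = length ts \<longrightarrow> (as \<in> D \<longleftrightarrow>
        (\<exists>g. (\<forall>i < length ts. g i = as ! i) \<and> (\<forall>(r, xs) \<in> set cons. map g xs \<in> rel r) \<and>
             (\<forall>(u, v) \<in> set eqs. g u = g v)))"
    using pp unfolding pp_definable_def by blast
  have iff: "as \<in> D \<longleftrightarrow>
      (\<exists>g. (\<forall>i < length ts. g i = as ! i) \<and> cons_sat rel cons g \<and> (\<forall>(u, v) \<in> set eqs. g u = g v))"
    if "length as = length ts" for as
    using iff0 that unfolding cons_sat_def by blast
  define E where "E = equivclp (\<lambda>u v. (u, v) \<in> set eqs)"
  have "equivp E" and eqs: "\<forall>(u, v) \<in> set eqs. E u v" unfolding E_def by auto
  have respE: "g u = g v" if "\<forall>(u, v) \<in> set eqs. g u = g v" "E u v" for g :: "nat \<Rightarrow> 'a" and u v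
    using that(2) unfolding E_def by (rule equivclp_imp_eq) (use that(1) in auto)
  have distinct_free: "i = j" if ij: "i < length ts" "j < length ts" "E i j" for i j
  proof (rule ccontr)
    assume "i \<noteq> j"
    then obtain as where "as \<in> D" "length as = length ts" "as ! i \<noteq> as ! j" using sep ij by blast
    then show False using iff respE[of _ i j] ij by metis
  qed
  define cs where "cs = map (\<lambda>(r, xs). (r, map (canon_subst E ts \<phi>) xs)) cons"
  have "map G ts \<in> D" if "cons_sat rel cs G" for G
    using canon_subst_sound[OF \<open>equivp E\<close> eqs distinct_free that[unfolded cs_def]] iff[of "map G ts"] by simp
  moreover have "\<exists>G. (\<forall>x \<in> set ts. G x = G0 x) \<and> cons_sat rel cs G" if G0: "map G0 ts \<in> D" for G0
  proof -
    obtain g where g: "\<forall>i < length ts. g i = G0 (ts ! i)" "cons_sat rel cons g" "\<forall>(u, v) \<in> set eqs. g u = g v"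
      using iff[of "map G0 ts"] G0 by auto
    show ?thesis
      using canon_subst_complete[where g = g and g0 = G0, OF \<open>equivp E\<close> respE[OF g(3)] g(1,2) fresh]
      unfolding cs_def .
  qed
  moreover have "\<forall>(r, xs) \<in> set cs. length xs = ar r" using scope unfolding cs_def by auto
  ultimately show ?thesis unfolding pp_encodes_def by blast
qed

section \<open>Pentagons\<close>

lemma gen_sublattice_subset_singleton:
  assumes "G \<subseteq> {x}" "trans x"
  shows "gen_sublattice G \<subseteq> {x}"
proof
  fix y assume "y \<in> gen_sublattice G"
  then show "y \<in> {x}" by induction (use assms in \<open>auto simp: trancl_id\<close>)
qed

lemma pent_L_nontrivial_imp_two_points:
  assumes "equiv P a" "equiv P b" "equiv P c" "nontrivial (pent_L P a b c)"
  obtains p p' where "p \<in> P" "p' \<in> P" "p \<noteq> p'"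
proof -
  have "\<exists>p \<in> P. \<exists>p' \<in> P. p \<noteq> p'"
  proof (rule ccontr)
    assume "\<not> ?thesis"
    then consider "P = {}" | p where "P = {p}" by blast
    then have "{pent_alpha P a c bb | bb. bb \<in> pent_B P b} \<subseteq> {{(P, P)}}"
    proof cases
      case (2 p)
      have "(p, p) \<in> a" "a``{p} = {p}" "b``{p} = {p}" "c``{p} = {p}"
        using assms(1-3) unfolding 2 equiv_def refl_on_def by auto
      then show ?thesis
        unfolding 2 pent_alpha_def pent_B_def pent_C_def singleton_quotient by auto
    qed (simp add: pent_B_def)
    then have "pent_L P a b c \<subseteq> {{(P, P)}}"
      unfolding pent_L_def by (rule gen_sublattice_subset_singleton) (simp add: trans_def)
    then show False using assms(4) unfolding nontrivial_def by auto
  qed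
  then show ?thesis using that by blast
qed

lemma some_in_quotient:
  assumes "equiv A r" "X \<in> A // r"
  shows "(SOME x. x \<in> X) \<in> X"
  using in_quotient_imp_non_empty[OF assms] by (simp add: some_in_eq)

lemma Image_some_in_quotient:
  assumes "equiv A r" "X \<in> A // r"
  shows "r `` {SOME x. x \<in> X} = X"
proof -
  obtain x where x: "x \<in> A" "X = r `` {x}" using assms(2) by (rule quotientE)
  then have "(x, SOME x. x \<in> X) \<in> r" using some_in_quotient[OF assms] by simp
  then show ?thesis using x(2) equiv_class_eq[OF assms(1)] by metis
qed

lemma pent_R_I:
  assumes "B \<in> P // b" "X \<in> P // c" "Y \<in> P // c" "p \<in> B \<inter> X" "p' \<in> B \<inter> Y" "(p, p') \<in> a"
  shows "(B, X, Y) \<in> pent_R P a b c"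
  using assms unfolding pent_R_def pent_alpha_def pent_B_def pent_C_def by blast

lemma pent_R_witness:
  assumes "(B, X, Y) \<in> pent_R P a b c"
  shows "\<exists>pp. fst pp \<in> B \<inter> X \<and> snd pp \<in> B \<inter> Y \<and> pp \<in> a"
  using assms unfolding pent_R_def pent_alpha_def by auto

section \<open>The CSP instance\<close>

text \<open>Variables of the constructed CSP instance: 4v stands for the Pent-Eval variable v,
  4i+1 for the i-th point of the pentagon (an anchor), 8j+2 and 8j+6 for the two points
  witnessing the j-th R-atom, and 4u+3 for the existential variables of the pp-definition
  confining everything to a common pentagon.\<close>

definition pp_scope :: "nat \<Rightarrow> pent_inst \<Rightarrow> nat list" where
  "pp_scope n I = map (\<lambda>i. 4 * i + 1) [0..<n] @
     map (\<lambda>v. 4 * v) (sorted_list_of_set (pX I \<union> pY I \<union> pEX I \<union> pEY I)) @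
     concat (map (\<lambda>j. [8 * j + 2, 8 * j + 6]) [0..<length (patoms I)])"

fun atom_gadget :: "'r \<Rightarrow> 'r \<Rightarrow> 'r \<Rightarrow> nat \<Rightarrow> nat \<times> nat \<times> nat \<Rightarrow> ('r \<times> nat list) list" where
  "atom_gadget sa sb sg j (u, v, v') =
     [(sb, [8 * j + 2, 4 * u]), (sg, [8 * j + 2, 4 * v]), (sb, [8 * j + 6, 4 * u]),
      (sg, [8 * j + 6, 4 * v']), (sa, [8 * j + 2, 8 * j + 6])]"

definition atom_constraints :: "'r \<Rightarrow> 'r \<Rightarrow> 'r \<Rightarrow> pent_inst \<Rightarrow> ('r \<times> nat list) list" where
  "atom_constraints sa sb sg I =
     concat (map (\<lambda>j. atom_gadget sa sb sg j (patoms I ! j)) [0..<length (patoms I)])"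

definition eq_constraints :: "'r \<Rightarrow> 'r \<Rightarrow> pent_inst \<Rightarrow> ('r \<times> nat list) list" where
  "eq_constraints sb sg I =
     map (\<lambda>(u, v). (if u \<in> pX I \<union> pEX I then sb else sg, [4 * u, 4 * v])) (peqs I)"

definition red_vars :: "nat \<Rightarrow> pent_inst \<Rightarrow> nat set" where
  "red_vars n I = (\<lambda>v. 4 * v) ` (pX I \<union> pY I) \<union> (\<lambda>i. 4 * i + 1) ` {..<n}"

text \<open>Half of the weight sits on the copies of the free variables, the other half is spread
  over the anchors, so that moving an anchor costs 1/(2n).\<close>

definition red_weight :: "nat \<Rightarrow> pent_inst \<Rightarrow> nat \<Rightarrow> real" where
  "red_weight n I w = (if w mod 4 = 0 then pweight I (w div 4) / 2
     else if w mod 4 = 1 then 1 / (2 * real n) else 0)"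

definition red_inst :: "nat \<Rightarrow> ('r \<times> nat list) list \<Rightarrow> pent_inst \<Rightarrow> 'r csp_inst" where
  "red_inst n cs I = \<lparr>cvars = red_vars n I, cevars = (\<Union>(r, xs) \<in> set cs. set xs) - red_vars n I,
     ccons = cs, cweight = red_weight n I\<rparr>"

definition red_assign :: "'a list \<Rightarrow> (nat \<Rightarrow> 'a set) \<Rightarrow> nat \<Rightarrow> 'a" where
  "red_assign ps f w = (if w mod 4 = 0 then SOME x. x \<in> f (w div 4) else ps ! (w div 4))"

lemma var_code_simps [simp]:
  fixes i j :: nat
  shows "(4 * i + 1) mod 4 = 1" "(4 * i + 1) div 4 = i" "Suc (4 * i) mod 4 = 1" "Suc (4 * i) div 4 = i"
    "\<not> 4 dvd Suc (4 * i)"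
    "(4 * i) mod 4 = 0" "(4 * i) div 4 = i"
    "(8 * j + 2) mod 4 = 2" "(8 * j + 2) mod 8 = 2" "(8 * j + 2) div 8 = j"
    "Suc (Suc (8 * j)) mod 4 = 2" "Suc (Suc (8 * j)) mod 8 = 2" "Suc (Suc (8 * j)) div 8 = j"
    "(8 * j + 6) mod 4 = 2" "(8 * j + 6) mod 8 = 6" "(8 * j + 6) div 8 = j"
  by presburger+

lemma cvars_red_inst [simp]: "cvars (red_inst n cs I) = red_vars n I"
  by (simp add: red_inst_def)

lemma pent_wf_finite_vars: "pent_wf I \<Longrightarrow> finite (pX I \<union> pY I \<union> pEX I \<union> pEY I)"
  unfolding pent_wf_def by simp

lemma pent_wf_sorts_disjoint: "pent_wf I \<Longrightarrow> (pX I \<union> pEX I) \<inter> (pY I \<union> pEY I) = {}"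
  unfolding pent_wf_def by auto

lemma set_pp_scope:
  assumes "finite (pX I \<union> pY I \<union> pEX I \<union> pEY I)"
  shows "set (pp_scope n I) = (\<lambda>i. 4 * i + 1) ` {..<n} \<union> (\<lambda>v. 4 * v) ` (pX I \<union> pY I \<union> pEX I \<union> pEY I) \<union>
    (\<lambda>j. 8 * j + 2) ` {..<length (patoms I)} \<union> (\<lambda>j. 8 * j + 6) ` {..<length (patoms I)}"
  using assms unfolding pp_scope_def by (auto simp: lessThan_atLeast0)

lemma pp_scope_nth: "i < n \<Longrightarrow> pp_scope n I ! i = 4 * i + 1"
  unfolding pp_scope_def by (simp add: nth_append)

lemma length_pp_scope: "n \<le> length (pp_scope n I)"
  unfolding pp_scope_def by simp

lemma pp_scope_fresh: "4 * u + 3 \<notin> set (pp_scope n I)"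
proof -
  have "w mod 4 \<noteq> 3" if "w \<in> set (pp_scope n I)" for w using that unfolding pp_scope_def by auto
  moreover have "(4 * u + 3) mod 4 = (3::nat)" by presburger
  ultimately show ?thesis by metis
qed

lemma mem_atom_constraints:
  "x \<in> set (atom_constraints sa sb sg I) \<longleftrightarrow>
     (\<exists>j < length (patoms I). x \<in> set (atom_gadget sa sb sg j (patoms I ! j)))"
  unfolding atom_constraints_def by auto

lemma cons_sat_atom_constraints:
  "cons_sat rel (atom_constraints sa sb sg I) g \<longleftrightarrow>
     (\<forall>j < length (patoms I). cons_sat rel (atom_gadget sa sb sg j (patoms I ! j)) g)"
  unfolding atom_constraints_def cons_sat_concat by auto

lemma cons_sat_atom_gadget:
  "cons_sat rel (atom_gadget sa sb sg j (u, v, v')) g \<longleftrightarrow>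
     (g (8 * j + 2), g (4 * u)) \<in> binrel rel sb \<and> (g (8 * j + 2), g (4 * v)) \<in> binrel rel sg \<and>
     (g (8 * j + 6), g (4 * u)) \<in> binrel rel sb \<and> (g (8 * j + 6), g (4 * v')) \<in> binrel rel sg \<and>
     (g (8 * j + 2), g (8 * j + 6)) \<in> binrel rel sa"
  unfolding cons_sat_def binrel_def by simp

lemma cons_sat_eq_constraints:
  "cons_sat rel (eq_constraints sb sg I) g \<longleftrightarrow>
     (\<forall>(u, v) \<in> set (peqs I). (g (4 * u), g (4 * v)) \<in> binrel rel (if u \<in> pX I \<union> pEX I then sb else sg))"
  unfolding cons_sat_def eq_constraints_def binrel_def by auto

lemma atom_constraints_scope:
  assumes "pent_wf I" "(r, xs) \<in> set (atom_constraints sa sb sg I)"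
  shows "r \<in> {sa, sb, sg}" "length xs = 2" "set xs \<subseteq> set (pp_scope n I)"
proof -
  obtain j u v v' where j: "j < length (patoms I)" "patoms I ! j = (u, v, v')" and
    "(r, xs) \<in> set (atom_gadget sa sb sg j (u, v, v'))"
    using assms(2) unfolding mem_atom_constraints by (metis prod_cases3)
  moreover have "u \<in> pX I \<union> pEX I" "v \<in> pY I \<union> pEY I" "v' \<in> pY I \<union> pEY I"
    using assms(1) nth_mem[OF j(1)] unfolding j(2) pent_wf_def by auto
  moreover note pent_wf_finite_vars[OF assms(1)]
  ultimately show "r \<in> {sa, sb, sg}" "length xs = 2" "set xs \<subseteq> set (pp_scope n I)"
    by (auto simp: set_pp_scope)
qed

lemma eq_constraints_scope:
  assumes "pent_wf I" "(r, xs) \<in> set (eq_constraints sb sg I)"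
  shows "r \<in> {sb, sg}" "length xs = 2" "set xs \<subseteq> set (pp_scope n I)"
proof -
  obtain u v where "(u, v) \<in> set (peqs I)" "xs = [4 * u, 4 * v]" "r \<in> {sb, sg}"
    using assms(2) unfolding eq_constraints_def by auto
  moreover note pent_wf_finite_vars[OF assms(1)]
  ultimately show "r \<in> {sb, sg}" "length xs = 2" "set xs \<subseteq> set (pp_scope n I)"
    using assms(1) unfolding pent_wf_def by (auto simp: set_pp_scope)
qed

lemma red_vars_subset_pp_scope:
  "finite (pX I \<union> pY I \<union> pEX I \<union> pEY I) \<Longrightarrow> red_vars n I \<subseteq> set (pp_scope n I)"
  unfolding red_vars_def by (auto simp: set_pp_scope)

lemma red_weight_free_vars:
  "finite S \<Longrightarrow> (\<Sum>w \<in> (\<lambda>v. 4 * v) ` S. red_weight n I w) = (\<Sum>v \<in> S. pweight I v) / 2"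
  by (subst sum.reindex) (auto simp: inj_on_def red_weight_def sum_divide_distrib)

lemma red_weight_nonneg: "pent_wf I \<Longrightarrow> w \<in> red_vars n I \<Longrightarrow> 0 \<le> red_weight n I w"
  unfolding red_vars_def red_weight_def pent_wf_def pent_vars_def by auto

lemma red_inst_wf:
  assumes wf: "pent_wf I" and "n \<ge> 1" and arity: "\<forall>(r, xs) \<in> set cs. length xs = ar r"
  shows "csp_wf ar (red_inst n cs I)"
proof -
  have fin: "finite (pX I \<union> pY I)" using wf unfolding pent_wf_def by auto
  have "4 * v \<noteq> 4 * i + (1::nat)" for v i by presburger
  then have disj: "(\<lambda>v. 4 * v) ` A \<inter> (\<lambda>i. 4 * i + 1) ` B = ({} :: nat set)" for A B by blast
  have "(\<Sum>w \<in> red_vars n I. red_weight n I w) =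
      (\<Sum>w \<in> (\<lambda>v. 4 * v) ` (pX I \<union> pY I). red_weight n I w) + (\<Sum>w \<in> (\<lambda>i. 4 * i + 1) ` {..<n}. red_weight n I w)"
    unfolding red_vars_def by (rule sum.union_disjoint) (use fin disj in auto)
  also have "(\<Sum>w \<in> (\<lambda>v. 4 * v) ` (pX I \<union> pY I). red_weight n I w) = 1 / 2"
    using wf fin unfolding pent_wf_def pent_vars_def by (simp add: red_weight_free_vars)
  also have "(\<Sum>w \<in> (\<lambda>i. 4 * i + 1) ` {..<n}. red_weight n I w) = (\<Sum>i < n. 1 / (2 * real n))"
    by (subst sum.reindex) (auto simp: inj_on_def red_weight_def)
  also have "\<dots> = 1 / 2" using \<open>n \<ge> 1\<close> by simp
  finally have "(\<Sum>w \<in> red_vars n I. red_weight n I w) = 1" by simp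
  moreover have "finite (red_vars n I)" unfolding red_vars_def using fin by auto
  ultimately show ?thesis
    using arity red_weight_nonneg[OF wf] unfolding csp_wf_def red_inst_def by auto
qed

lemma card_red_vars:
  assumes "pent_wf I"
  shows "card (red_vars n I) \<le> (n + 1) * card (pent_vars I)"
proof -
  have fin: "finite (pent_vars I)" using assms unfolding pent_wf_def pent_vars_def by auto
  moreover have "pent_vars I \<noteq> {}" using assms unfolding pent_wf_def by auto
  ultimately have "card (pent_vars I) \<ge> 1" by (simp add: Suc_leI card_gt_0_iff)
  have "card (red_vars n I) \<le> card ((\<lambda>v. 4 * v) ` pent_vars I) + card ((\<lambda>i. 4 * i + 1) ` {..<n})"
    unfolding red_vars_def pent_vars_def by (rule card_Un_le)
  also have "\<dots> \<le> card (pent_vars I) + n"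
    using card_image_le[OF fin, of "\<lambda>v. 4 * v"] card_image_le[of "{..<n}" "\<lambda>i. 4 * i + 1"] by simp
  also have "\<dots> \<le> (n + 1) * card (pent_vars I)" using \<open>card (pent_vars I) \<ge> 1\<close> by (simp add: algebra_simps)
  finally show ?thesis .
qed

lemma red_assign_local:
  assumes "w \<in> red_vars n I"
  shows "\<exists>S \<subseteq> pent_vars I. card S \<le> 1 \<and> (\<forall>f g. (\<forall>v \<in> S. f v = g v) \<longrightarrow> red_assign ps f w = red_assign ps g w)"
proof -
  consider v where "v \<in> pent_vars I" "w = 4 * v" | i where "w = 4 * i + 1"
    using assms unfolding red_vars_def pent_vars_def by auto
  then show ?thesis
  proof cases
    case (1 v) then show ?thesis by (intro exI[of _ "{v}"]) (auto simp: red_assign_def)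
  next
    case (2 i) then show ?thesis by (intro exI[of _ "{}"]) (auto simp: red_assign_def)
  qed
qed

section \<open>Correctness of the reduction\<close>

lemma linear_reductionI_deterministic:
  fixes inst :: "'i \<Rightarrow> 'j" and tr :: "('v \<Rightarrow> 'x) \<Rightarrow> 'w \<Rightarrow> 'y" and c :: real
  assumes "c > 0"
    and "\<And>I. wfi I \<Longrightarrow> wfi' (inst I)"
    and "\<And>I. wfi I \<Longrightarrow> card (vars' (inst I)) \<le> m * card (vars I)"
    and "\<And>I v'. wfi I \<Longrightarrow> v' \<in> vars' (inst I) \<Longrightarrow>
           \<exists>S \<subseteq> vars I. card S \<le> q \<and> (\<forall>f g. (\<forall>v \<in> S. f v = g v) \<longrightarrow> tr f v' = tr g v')"
    and "\<And>I f. wfi I \<Longrightarrow> asg I f \<Longrightarrow> asg' (inst I) (tr f)"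
    and "\<And>I f. wfi I \<Longrightarrow> asg I f \<Longrightarrow> sat I f \<Longrightarrow> sat' (inst I) (tr f)"
    and "\<And>I f \<epsilon>. wfi I \<Longrightarrow> asg I f \<Longrightarrow> 0 < \<epsilon> \<Longrightarrow> \<epsilon> < 1 \<Longrightarrow> dst I f \<ge> ereal \<epsilon> \<Longrightarrow>
           dst' (inst I) (tr f) \<ge> ereal (c * \<epsilon>)"
  shows "linear_reduction wfi vars asg sat dst wfi' vars' asg' sat' dst'"
  unfolding linear_reduction_def
  by (rule exI[of _ "\<lambda>I. return_pmf (inst I, tr)"], rule exI[of _ m], rule exI[of _ c], rule exI[of _ q])
     (use assms in \<open>auto simp: measure_return\<close>)

lemma wdist_le_sum: "g \<in> S \<Longrightarrow> wdist V w S f \<le> ereal (\<Sum>v \<in> {v \<in> V. f v \<noteq> g v}. w v)"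
  unfolding wdist_def by (rule INF_lower2) auto

locale pentagon_reduction =
  fixes rel :: "'r \<Rightarrow> 'a list set" and ar :: "'r \<Rightarrow> nat" and sa sb sg :: 'r
    and Pc :: "'a set set" and P :: "'a set" and ps :: "'a list"
    and pp_cs :: "pent_inst \<Rightarrow> ('r \<times> nat list) list"
  assumes ar_binary: "ar sa = 2" "ar sb = 2" "ar sg = 2"
    and pentagon: "is_pentagon P (binrel rel sa \<inter> P \<times> P) (binrel rel sb \<inter> P \<times> P) (binrel rel sg \<inter> P \<times> P)"
    and P_in: "P \<in> Pc" and P_max: "\<forall>Q \<in> Pc. Q \<noteq> P \<longrightarrow> \<not> P \<subseteq> Q"
    and set_ps: "set ps = P" and ps_ne: "ps \<noteq> []"
    and pp_cs: "\<And>I. pp_encodes rel ar {as. length as = length (pp_scope (length ps) I) \<and> (\<exists>Q \<in> Pc. set as \<subseteq> Q)}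
                   (pp_scope (length ps) I) (pp_cs I)"
begin

abbreviation "\<alpha> \<equiv> binrel rel sa \<inter> P \<times> P"
abbreviation "\<beta> \<equiv> binrel rel sb \<inter> P \<times> P"
abbreviation "\<gamma> \<equiv> binrel rel sg \<inter> P \<times> P"
abbreviation "n \<equiv> length ps"

definition constraints :: "pent_inst \<Rightarrow> ('r \<times> nat list) list" where
  "constraints I = atom_constraints sa sb sg I @ eq_constraints sb sg I @ pp_cs I"

abbreviation red :: "pent_inst \<Rightarrow> 'r csp_inst" where
  "red I \<equiv> red_inst n (constraints I) I"

lemma equiv_\<beta>: "equiv P \<beta>" and equiv_\<gamma>: "equiv P \<gamma>"
  using pentagon unfolding is_pentagon_def by auto

lemma sym_\<beta>: "(x, y) \<in> \<beta> \<Longrightarrow> (y, x) \<in> \<beta>" and sym_\<gamma>: "(x, y) \<in> \<gamma> \<Longrightarrow> (y, x) \<in> \<gamma>"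
  using equiv_\<beta> equiv_\<gamma> by (meson equivE symD)+

lemma n_pos: "n \<ge> 1"
  using ps_ne by (simp add: Suc_leI)

lemma red_wf:
  assumes "pent_wf I"
  shows "csp_wf ar (red I)"
proof (rule red_inst_wf[OF assms n_pos])
  have "length xs = ar r" if rxs: "(r, xs) \<in> set (constraints I)" for r xs
  proof -
    consider "(r, xs) \<in> set (atom_constraints sa sb sg I)" | "(r, xs) \<in> set (eq_constraints sb sg I)"
      | "(r, xs) \<in> set (pp_cs I)"
      using rxs unfolding constraints_def by auto
    then show ?thesis
    proof cases
      case 1 then show ?thesis using atom_constraints_scope[OF assms 1] ar_binary by auto
    next
      case 2 then show ?thesis using eq_constraints_scope[OF assms 2] ar_binary by auto
    next
      case 3 then show ?thesis using pp_cs[of I] unfolding pp_encodes_def by auto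
    qed
  qed
  then show "\<forall>(r, xs) \<in> set (constraints I). length xs = ar r" by blast
qed

lemma pp_cs_confines:
  assumes "cons_sat rel (pp_cs I) G"
  obtains Q where "Q \<in> Pc" "G ` set (pp_scope n I) \<subseteq> Q"
proof -
  have "map G (pp_scope n I) \<in> {as. length as = length (pp_scope n I) \<and> (\<exists>Q \<in> Pc. set as \<subseteq> Q)}"
    using pp_cs[of I] assms unfolding pp_encodes_def by blast
  then show ?thesis using that by auto
qed

lemma pp_cs_extends:
  assumes "\<forall>w \<in> set (pp_scope n I). G0 w \<in> P"
  obtains G where "\<forall>w \<in> set (pp_scope n I). G w = G0 w" "cons_sat rel (pp_cs I) G"
proof -
  have "map G0 (pp_scope n I) \<in> {as. length as = length (pp_scope n I) \<and> (\<exists>Q \<in> Pc. set as \<subseteq> Q)}"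
    using assms P_in by auto
  then have "\<exists>G. (\<forall>w \<in> set (pp_scope n I). G w = G0 w) \<and> cons_sat rel (pp_cs I) G"
    using pp_cs[of I] unfolding pp_encodes_def by blast
  then show ?thesis using that by blast
qed

text \<open>Maximality of P is used here: a solution that keeps the anchors on the points of P
  lives in a pentagon containing P, hence in P itself.\<close>

lemma anchored_in_P:
  assumes "cons_sat rel (pp_cs I) G" and anchored: "\<forall>i < n. G (4 * i + 1) = ps ! i"
    and "w \<in> set (pp_scope n I)"
  shows "G w \<in> P"
proof -
  obtain Q where Q: "Q \<in> Pc" "G ` set (pp_scope n I) \<subseteq> Q" using pp_cs_confines[OF assms(1)] .
  have "P \<subseteq> Q"
  proof
    fix x assume "x \<in> P"
    then obtain i where "i < n" "x = ps ! i" using set_ps by (metis in_set_conv_nth)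
    moreover have "4 * i + 1 \<in> set (pp_scope n I)"
      using \<open>i < n\<close> pp_scope_nth[of i n I] length_pp_scope[of n I] by (metis nth_mem order_less_le_trans)
    ultimately show "x \<in> Q" using Q(2) anchored by force
  qed
  then have "Q = P" using P_max Q(1) by blast
  then show ?thesis using Q(2) assms(3) by blast
qed

definition decode :: "pent_inst \<Rightarrow> (nat \<Rightarrow> 'a) \<Rightarrow> nat \<Rightarrow> 'a set" where
  "decode I G v = (if v \<in> pX I \<union> pEX I then \<beta> `` {G (4 * v)} else \<gamma> `` {G (4 * v)})"

context
  fixes I :: pent_inst and G :: "nat \<Rightarrow> 'a"
  assumes wf: "pent_wf I" and sat: "cons_sat rel (constraints I) G"
    and anchored: "\<forall>i < n. G (4 * i + 1) = ps ! i"
begin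

lemmas finite_all_vars = pent_wf_finite_vars[OF wf]
lemmas sorts_disjoint = pent_wf_sorts_disjoint[OF wf]

lemma scope_in_P: "w \<in> set (pp_scope n I) \<Longrightarrow> G w \<in> P"
  using sat unfolding constraints_def by (auto intro: anchored_in_P[OF _ anchored])

lemma anchored_var_in_P: "v \<in> pX I \<union> pY I \<union> pEX I \<union> pEY I \<Longrightarrow> G (4 * v) \<in> P"
  by (rule scope_in_P) (use finite_all_vars in \<open>simp add: set_pp_scope\<close>)

lemma decode_first_sort: "v \<in> pX I \<union> pEX I \<Longrightarrow> decode I G v \<in> P // \<beta>"
  using anchored_var_in_P unfolding decode_def by (auto intro: quotientI)

lemma decode_second_sort: "v \<in> pY I \<union> pEY I \<Longrightarrow> decode I G v \<in> P // \<gamma>"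
  using anchored_var_in_P sorts_disjoint unfolding decode_def by (auto intro: quotientI)

lemma decode_atom:
  assumes "(u, v, v') \<in> set (patoms I)"
  shows "(decode I G u, decode I G v, decode I G v') \<in> pent_R P \<alpha> \<beta> \<gamma>"
proof -
  obtain j where j: "j < length (patoms I)" "patoms I ! j = (u, v, v')"
    using assms by (metis in_set_conv_nth)
  have sorts: "u \<in> pX I \<union> pEX I" "v \<in> pY I \<union> pEY I" "v' \<in> pY I \<union> pEY I"
    using wf assms unfolding pent_wf_def by auto
  have inP: "G (8 * j + 2) \<in> P" "G (8 * j + 6) \<in> P"
    using scope_in_P finite_all_vars j(1) by (auto simp: set_pp_scope)
  have "\<forall>j < length (patoms I). cons_sat rel (atom_gadget sa sb sg j (patoms I ! j)) G"
    using sat unfolding constraints_def cons_sat_append cons_sat_atom_constraints by blast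
  then have "cons_sat rel (atom_gadget sa sb sg j (u, v, v')) G" using j by auto
  then have rels: "(G (8 * j + 2), G (4 * u)) \<in> \<beta>" "(G (8 * j + 2), G (4 * v)) \<in> \<gamma>"
      "(G (8 * j + 6), G (4 * u)) \<in> \<beta>" "(G (8 * j + 6), G (4 * v')) \<in> \<gamma>"
      "(G (8 * j + 2), G (8 * j + 6)) \<in> \<alpha>"
    using inP anchored_var_in_P sorts unfolding cons_sat_atom_gadget by auto
  have "G (8 * j + 2) \<in> decode I G u \<inter> decode I G v" "G (8 * j + 6) \<in> decode I G u \<inter> decode I G v'"
    using sym_\<beta>[OF rels(1)] sym_\<gamma>[OF rels(2)] sym_\<beta>[OF rels(3)] sym_\<gamma>[OF rels(4)] sorts sorts_disjoint
    unfolding decode_def by auto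
  then show ?thesis
    using decode_first_sort[OF sorts(1)] decode_second_sort[OF sorts(2)] decode_second_sort[OF sorts(3)]
      rels(5) by (intro pent_R_I) auto
qed

lemma decode_eq:
  assumes "(u, v) \<in> set (peqs I)"
  shows "decode I G u = decode I G v"
proof -
  have sorts: "(u \<in> pX I \<union> pEX I \<and> v \<in> pX I \<union> pEX I) \<or> (u \<in> pY I \<union> pEY I \<and> v \<in> pY I \<union> pEY I)"
    using wf assms unfolding pent_wf_def by auto
  then have inP: "G (4 * u) \<in> P" "G (4 * v) \<in> P" using anchored_var_in_P by auto
  have rel_uv: "(G (4 * u), G (4 * v)) \<in> binrel rel (if u \<in> pX I \<union> pEX I then sb else sg)"
    using sat assms unfolding constraints_def cons_sat_append cons_sat_eq_constraints by auto
  show ?thesis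
  proof (cases "u \<in> pX I \<union> pEX I")
    case True
    then have "(G (4 * u), G (4 * v)) \<in> \<beta>" "v \<in> pX I \<union> pEX I"
      using rel_uv inP sorts sorts_disjoint by auto
    then show ?thesis using True equiv_class_eq[OF equiv_\<beta>] unfolding decode_def by simp
  next
    case False
    then have "(G (4 * u), G (4 * v)) \<in> \<gamma>" "v \<notin> pX I \<union> pEX I"
      using rel_uv inP sorts sorts_disjoint by auto
    then show ?thesis using False equiv_class_eq[OF equiv_\<gamma>] unfolding decode_def by simp
  qed
qed

lemma decode_sat: "pent_sat P \<alpha> \<beta> \<gamma> I (decode I G)"
  unfolding pent_sat_def pent_B_def pent_C_def
proof (intro exI[of _ "decode I G"] conjI)
  show "\<forall>(u, v, v') \<in> set (patoms I). (decode I G u, decode I G v, decode I G v') \<in> pent_R P \<alpha> \<beta> \<gamma>"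
    using decode_atom by blast
  show "\<forall>(u, v) \<in> set (peqs I). decode I G u = decode I G v"
    using decode_eq by blast
qed (use decode_first_sort decode_second_sort in auto)

end

definition atom_witness :: "'a set \<Rightarrow> 'a set \<Rightarrow> 'a set \<Rightarrow> 'a \<times> 'a" where
  "atom_witness B X Y = (SOME pp. fst pp \<in> B \<inter> X \<and> snd pp \<in> B \<inter> Y \<and> pp \<in> \<alpha>)"

lemma atom_witness:
  assumes "(B, X, Y) \<in> pent_R P \<alpha> \<beta> \<gamma>"
  shows "fst (atom_witness B X Y) \<in> B \<inter> X" "snd (atom_witness B X Y) \<in> B \<inter> Y" "atom_witness B X Y \<in> \<alpha>"
  using someI_ex[OF pent_R_witness[OF assms]] unfolding atom_witness_def by auto

definition encode :: "pent_inst \<Rightarrow> (nat \<Rightarrow> 'a set) \<Rightarrow> nat \<Rightarrow> 'a" where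
  "encode I g w = (if w mod 4 = 0 then SOME x. x \<in> g (w div 4)
     else if w mod 4 = 1 then ps ! (w div 4)
     else case patoms I ! (w div 8) of (u, v, v') \<Rightarrow>
       (if w mod 8 = 2 then fst else snd) (atom_witness (g u) (g v) (g v')))"

lemma encode_simps:
  "encode I g (4 * v) = (SOME x. x \<in> g v)" "encode I g (4 * i + 1) = ps ! i"
  "patoms I ! j = (u, v, v') \<Longrightarrow> encode I g (8 * j + 2) = fst (atom_witness (g u) (g v) (g v'))"
  "patoms I ! j = (u, v, v') \<Longrightarrow> encode I g (8 * j + 6) = snd (atom_witness (g u) (g v) (g v'))"
  unfolding encode_def by simp_all

context
  fixes I :: pent_inst and g :: "nat \<Rightarrow> 'a set"
  assumes wf: "pent_wf I"
    and first_sort: "\<forall>v \<in> pX I \<union> pEX I. g v \<in> P // \<beta>" and second_sort: "\<forall>v \<in> pY I \<union> pEY I. g v \<in> P // \<gamma>"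
    and atoms: "\<forall>(u, v, v') \<in> set (patoms I). (g u, g v, g v') \<in> pent_R P \<alpha> \<beta> \<gamma>"
    and eqs: "\<forall>(u, v) \<in> set (peqs I). g u = g v"
begin

lemma encode_var_in_class:
  assumes "v \<in> pX I \<union> pY I \<union> pEX I \<union> pEY I"
  shows "encode I g (4 * v) \<in> g v" "encode I g (4 * v) \<in> P"
proof -
  obtain r where "equiv P r" "g v \<in> P // r"
    using assms first_sort second_sort equiv_\<beta> equiv_\<gamma> by blast
  then show "encode I g (4 * v) \<in> g v" "encode I g (4 * v) \<in> P"
    using some_in_quotient in_quotient_imp_subset unfolding encode_simps by blast+
qed

lemma encode_atom:
  assumes j: "j < length (patoms I)" "patoms I ! j = (u, v, v')"
  shows "cons_sat rel (atom_gadget sa sb sg j (u, v, v')) (encode I g)"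
proof -
  have "(u, v, v') \<in> set (patoms I)" using j by (metis nth_mem)
  then have R: "(g u, g v, g v') \<in> pent_R P \<alpha> \<beta> \<gamma>" and
    sorts: "u \<in> pX I \<union> pEX I" "v \<in> pY I \<union> pEY I" "v' \<in> pY I \<union> pEY I"
    using atoms wf unfolding pent_wf_def by fastforce+
  note mem = atom_witness[OF R] encode_var_in_class(1) sorts
  note in_\<beta> = in_quotient_imp_in_rel[OF equiv_\<beta> first_sort[rule_format, OF sorts(1)]]
  note in_\<gamma> = in_quotient_imp_in_rel[OF equiv_\<gamma> second_sort[rule_format, OF sorts(2)]]
    in_quotient_imp_in_rel[OF equiv_\<gamma> second_sort[rule_format, OF sorts(3)]]
  have "(encode I g (8 * j + 2), encode I g (4 * u)) \<in> \<beta>" "(encode I g (8 * j + 6), encode I g (4 * u)) \<in> \<beta>"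
    unfolding encode_simps(3,4)[OF j(2)] by (rule in_\<beta>; use mem in auto)+
  moreover have "(encode I g (8 * j + 2), encode I g (4 * v)) \<in> \<gamma>" "(encode I g (8 * j + 6), encode I g (4 * v')) \<in> \<gamma>"
    unfolding encode_simps(3,4)[OF j(2)] by (rule in_\<gamma>; use mem in auto)+
  moreover have "(encode I g (8 * j + 2), encode I g (8 * j + 6)) \<in> \<alpha>"
    unfolding encode_simps(3,4)[OF j(2)] using atom_witness(3)[OF R] by simp
  ultimately show ?thesis unfolding cons_sat_atom_gadget by auto
qed

lemma encode_eq:
  assumes "(u, v) \<in> set (peqs I)"
  shows "(encode I g (4 * u), encode I g (4 * v)) \<in> binrel rel (if u \<in> pX I \<union> pEX I then sb else sg)"
proof -
  have "encode I g (4 * u) = encode I g (4 * v)" using eqs assms unfolding encode_simps by auto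
  moreover have "(u \<in> pX I \<union> pEX I \<and> v \<in> pX I \<union> pEX I) \<or> (u \<in> pY I \<union> pEY I \<and> v \<in> pY I \<union> pEY I)"
    using wf assms unfolding pent_wf_def by auto
  ultimately show ?thesis
    using encode_var_in_class(2) pent_wf_sorts_disjoint[OF wf] equiv_\<beta> equiv_\<gamma>
    unfolding equiv_def refl_on_def by auto
qed

lemma encode_in_P:
  assumes "w \<in> set (pp_scope n I)"
  shows "encode I g w \<in> P"
proof -
  consider i where "i < n" "w = 4 * i + 1" | v where "v \<in> pX I \<union> pY I \<union> pEX I \<union> pEY I" "w = 4 * v"
    | j u v v' where "j < length (patoms I)" "patoms I ! j = (u, v, v')" "w \<in> {8 * j + 2, 8 * j + 6}"
    using assms pent_wf_finite_vars[OF wf] by (auto simp: set_pp_scope) (metis prod_cases3)+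
  then show ?thesis
  proof cases
    case 1 then show ?thesis using set_ps encode_simps(2)[of I g i] by auto
  next
    case 2 then show ?thesis using encode_var_in_class(2) by simp
  next
    case (3 j u v v')
    then have "(g u, g v, g v') \<in> pent_R P \<alpha> \<beta> \<gamma>" using atoms by (metis nth_mem case_prodD)
    then have "atom_witness (g u) (g v) (g v') \<in> P \<times> P" using atom_witness(3) by blast
    then show ?thesis using 3(3) encode_simps(3,4)[OF 3(2)] by (auto simp: mem_Times_iff)
  qed
qed

lemma encode_atom_constraints: "cons_sat rel (atom_constraints sa sb sg I) (encode I g)"
  unfolding cons_sat_atom_constraints
proof (intro allI impI)
  fix j assume "j < length (patoms I)"
  moreover obtain u v v' where "patoms I ! j = (u, v, v')" by (metis prod_cases3)
  ultimately show "cons_sat rel (atom_gadget sa sb sg j (patoms I ! j)) (encode I g)"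
    using encode_atom by simp
qed

lemma encode_eq_constraints: "cons_sat rel (eq_constraints sb sg I) (encode I g)"
  unfolding cons_sat_eq_constraints using encode_eq by blast

end

lemma red_complete:
  assumes wf: "pent_wf I" and sat: "pent_sat P \<alpha> \<beta> \<gamma> I f"
  shows "csp_sat rel (red I) (red_assign ps f)"
proof -
  obtain g where g_free: "\<forall>v \<in> pent_vars I. g v = f v"
    and g: "\<forall>v \<in> pX I \<union> pEX I. g v \<in> P // \<beta>" "\<forall>v \<in> pY I \<union> pEY I. g v \<in> P // \<gamma>"
      "\<forall>(u, v, v') \<in> set (patoms I). (g u, g v, g v') \<in> pent_R P \<alpha> \<beta> \<gamma>" "\<forall>(u, v) \<in> set (peqs I). g u = g v"
    using sat unfolding pent_sat_def pent_B_def pent_C_def by blast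
  define G0 where "G0 = encode I g"
  have G0: "\<forall>w \<in> set (pp_scope n I). G0 w \<in> P" "\<forall>w \<in> red_vars n I. G0 w = red_assign ps f w"
    "cons_sat rel (atom_constraints sa sb sg I) G0" "cons_sat rel (eq_constraints sb sg I) G0"
    using encode_in_P[OF wf g] encode_atom_constraints[OF wf g] encode_eq_constraints[OF wf g] g_free
      encode_simps(1,2)[of I g] unfolding G0_def red_vars_def red_assign_def pent_vars_def by auto
  obtain G where G: "\<forall>w \<in> set (pp_scope n I). G w = G0 w" "cons_sat rel (pp_cs I) G"
    using pp_cs_extends[OF G0(1)] .
  have agree: "cons_sat rel cs G = cons_sat rel cs G0"
    if "\<And>r xs. (r, xs) \<in> set cs \<Longrightarrow> set xs \<subseteq> set (pp_scope n I)" for cs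
    by (rule cons_sat_cong) (use that G(1) in blast)
  have "cons_sat rel (atom_constraints sa sb sg I) G"
    using agree[of "atom_constraints sa sb sg I", OF atom_constraints_scope(3)[OF wf]] G0(3) by simp
  moreover have "cons_sat rel (eq_constraints sb sg I) G"
    using agree[of "eq_constraints sb sg I", OF eq_constraints_scope(3)[OF wf]] G0(4) by simp
  ultimately have "cons_sat rel (constraints I) G" using G(2) unfolding constraints_def by simp
  moreover have "\<forall>w \<in> red_vars n I. G w = red_assign ps f w"
    using G0(2) G(1) red_vars_subset_pp_scope[OF pent_wf_finite_vars[OF wf], of n] by auto
  ultimately show ?thesis
    unfolding csp_sat_def cons_sat_def by (intro exI[of _ G]) (simp add: red_inst_def)
qed

lemma decode_differs:
  assumes wf: "pent_wf I" and asg: "pent_assign P \<beta> \<gamma> I f" and v: "v \<in> pent_vars I"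
    and differs: "f v \<noteq> decode I G v"
  shows "red_assign ps f (4 * v) \<noteq> G (4 * v)"
proof
  assume "red_assign ps f (4 * v) = G (4 * v)"
  then have rep: "G (4 * v) = (SOME x. x \<in> f v)" unfolding red_assign_def by simp
  show False
  proof (cases "v \<in> pX I")
    case True
    then have "f v \<in> P // \<beta>" using asg unfolding pent_assign_def pent_B_def by auto
    then show False using differs True Image_some_in_quotient[OF equiv_\<beta>] rep unfolding decode_def by auto
  next
    case False
    then have "v \<in> pY I" "v \<notin> pEX I" using v wf unfolding pent_vars_def pent_wf_def by auto
    then have "f v \<in> P // \<gamma>" using asg unfolding pent_assign_def pent_C_def by auto
    then show False
      using differs False \<open>v \<notin> pEX I\<close> Image_some_in_quotient[OF equiv_\<gamma>] rep unfolding decode_def by auto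
  qed
qed

lemma anchored_mismatch_weight:
  assumes wf: "pent_wf I" and asg: "pent_assign P \<beta> \<gamma> I f" and dist: "pent_dist P \<alpha> \<beta> \<gamma> I f \<ge> ereal \<epsilon>"
    and sat: "cons_sat rel (constraints I) G" and anchored: "\<forall>i < n. G (4 * i + 1) = ps ! i"
  shows "\<epsilon> / 2 \<le> (\<Sum>w \<in> {w \<in> red_vars n I. red_assign ps f w \<noteq> G w}. red_weight n I w)"
proof -
  define S where "S = {v \<in> pent_vars I. f v \<noteq> decode I G v}"
  have fin: "finite (pent_vars I)" "finite (red_vars n I)"
    using pent_wf_finite_vars[OF wf] unfolding pent_vars_def red_vars_def by auto
  have "ereal \<epsilon> \<le> ereal (\<Sum>v \<in> S. pweight I v)"
    using dist wdist_le_sum[of "decode I G"] decode_sat[OF wf sat anchored]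
    unfolding pent_dist_def S_def by (meson mem_Collect_eq order_trans)
  moreover have sub: "(\<lambda>v. 4 * v) ` S \<subseteq> {w \<in> red_vars n I. red_assign ps f w \<noteq> G w}"
    using decode_differs[OF wf asg] unfolding S_def red_vars_def pent_vars_def by auto
  have "(\<Sum>w \<in> (\<lambda>v. 4 * v) ` S. red_weight n I w) \<le> (\<Sum>w \<in> {w \<in> red_vars n I. red_assign ps f w \<noteq> G w}. red_weight n I w)"
    by (rule sum_mono2[OF _ sub]) (use fin red_weight_nonneg[OF wf] in auto)
  moreover have "finite S" using fin unfolding S_def by simp
  ultimately show ?thesis by (simp add: red_weight_free_vars)
qed

lemma red_sound:
  assumes wf: "pent_wf I" and asg: "pent_assign P \<beta> \<gamma> I f" and "0 < \<epsilon>" "\<epsilon> < 1"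
    and dist: "pent_dist P \<alpha> \<beta> \<gamma> I f \<ge> ereal \<epsilon>"
  shows "csp_dist rel (red I) (red_assign ps f) \<ge> ereal (1 / (2 * real n) * \<epsilon>)"
  unfolding csp_dist_def wdist_def
proof (rule INF_greatest)
  fix G assume "G \<in> {g. csp_sat rel (red I) g}"
  then obtain G' where agree: "\<forall>w \<in> red_vars n I. G' w = G w" and sat: "cons_sat rel (constraints I) G'"
    unfolding csp_sat_def cons_sat_def by (auto simp: red_inst_def)
  define DS where "DS = {w \<in> red_vars n I. red_assign ps f w \<noteq> G w}"
  have "1 / (2 * real n) * \<epsilon> \<le> (\<Sum>w \<in> DS. red_weight n I w)"
  proof (cases "\<forall>i < n. G (4 * i + 1) = ps ! i")
    case True
    then have "\<forall>i < n. G' (4 * i + 1) = ps ! i" using agree unfolding red_vars_def by auto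
    moreover have "DS = {w \<in> red_vars n I. red_assign ps f w \<noteq> G' w}" using agree unfolding DS_def by auto
    ultimately have "\<epsilon> / 2 \<le> (\<Sum>w \<in> DS. red_weight n I w)"
      using anchored_mismatch_weight[OF wf asg dist sat] by simp
    moreover have "1 / (2 * real n) \<le> 1 / 2" using n_pos by (intro divide_left_mono) auto
    then have "1 / (2 * real n) * \<epsilon> \<le> 1 / 2 * \<epsilon>" using \<open>0 < \<epsilon>\<close> by (intro mult_right_mono) auto
    ultimately show ?thesis by linarith
  next
    case False
    then obtain i where "i < n" "G (4 * i + 1) \<noteq> ps ! i" by blast
    then have "4 * i + 1 \<in> DS" unfolding DS_def red_vars_def red_assign_def by auto
    then have "red_weight n I (4 * i + 1) \<le> (\<Sum>w \<in> DS. red_weight n I w)"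
      by (rule member_le_sum) (use red_weight_nonneg[OF wf] pent_wf_finite_vars[OF wf] in
           \<open>auto simp: DS_def red_vars_def\<close>)
    moreover have "red_weight n I (4 * i + 1) = 1 / (2 * real n)" by (simp add: red_weight_def)
    moreover have "1 / (2 * real n) * \<epsilon> \<le> 1 / (2 * real n)" using \<open>\<epsilon> < 1\<close> by (intro mult_left_le) auto
    ultimately show ?thesis by linarith
  qed
  then show "ereal (1 / (2 * real n) * \<epsilon>) \<le> ereal (\<Sum>w \<in> {w \<in> cvars (red I). red_assign ps f w \<noteq> G w}. cweight (red I) w)"
    unfolding DS_def red_inst_def by simp
qed

theorem linear_reduction_to_csp:
  "linear_reduction pent_wf pent_vars (pent_assign P \<beta> \<gamma>) (pent_sat P \<alpha> \<beta> \<gamma>) (pent_dist P \<alpha> \<beta> \<gamma>)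
     (csp_wf ar) cvars (\<lambda>_ _. True) (csp_sat rel) (csp_dist rel)"
proof (rule linear_reductionI_deterministic[where c = "1 / (2 * real n)" and m = "n + 1" and q = 1
      and inst = red and tr = "red_assign ps"])
  show "0 < 1 / (2 * real n)" using ps_ne by simp
qed (auto simp only: cvars_red_inst intro: red_wf card_red_vars red_assign_local red_complete red_sound)

end

lemma common_pentagon_separates:
  assumes "P \<in> Pc" "p \<in> P" "p' \<in> P" "p \<noteq> p'" "i < k" "j < k" "i \<noteq> j"
  shows "\<exists>as \<in> {as. length as = k \<and> (\<exists>Q \<in> Pc. set as \<subseteq> Q)}. length as = k \<and> as ! i \<noteq> as ! j"
proof (intro bexI conjI)
  let ?as = "(replicate k p)[j := p']"
  have "set ?as \<subseteq> P" using set_update_subset_insert[of "replicate k p" j p'] assms(2,3) by auto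
  then show "?as \<in> {as. length as = k \<and> (\<exists>Q \<in> Pc. set as \<subseteq> Q)}" using assms(1) by auto
qed (use assms in auto)

lemma common_pentagon_pp_encodes:
  assumes ppdef: "\<forall>k \<ge> 1. pp_definable rel ar k {as. length as = k \<and> (\<exists>Q \<in> Pc. set as \<subseteq> Q)}"
    and "P \<in> Pc" "p \<in> P" "p' \<in> P" "p \<noteq> p'" "n \<ge> 1"
  shows "\<exists>cs. pp_encodes rel ar {as. length as = length (pp_scope n I) \<and> (\<exists>Q \<in> Pc. set as \<subseteq> Q)}
           (pp_scope n I) cs"
proof (rule pp_definable_encodes[where \<phi> = "\<lambda>u. 4 * u + 3"])
  have "1 \<le> length (pp_scope n I)" using \<open>n \<ge> 1\<close> length_pp_scope order_trans by blast
  then show "pp_definable rel ar (length (pp_scope n I))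
      {as. length as = length (pp_scope n I) \<and> (\<exists>Q \<in> Pc. set as \<subseteq> Q)}"
    using ppdef by blast
  show "inj (\<lambda>u. 4 * u + 3 :: nat)" by (auto simp: inj_def)
next
  show "\<And>u. 4 * u + 3 \<notin> set (pp_scope n I)" by (rule pp_scope_fresh)
qed (rule common_pentagon_separates[OF assms(2-5)])

theorem mainTheorem16:
  fixes rel :: "'r::finite \<Rightarrow> 'a::finite list set"
    and ar :: "'r \<Rightarrow> nat"
    and sa sb sg :: 'r
    and Pc :: "'a set set"
    and P :: "'a set"
  assumes rel_arity: "\<forall>r. \<forall>xs \<in> rel r. length xs = ar r"
    and ar_a: "ar sa = 2" and ar_b: "ar sb = 2" and ar_g: "ar sg = 2"
    and fin_Pc: "finite Pc"
    and pentagons: "\<forall>Q \<in> Pc. is_pentagon Q (binrel rel sa \<inter> Q \<times> Q)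
                                        (binrel rel sb \<inter> Q \<times> Q) (binrel rel sg \<inter> Q \<times> Q)"
    and ppdef: "\<forall>k \<ge> 1. pp_definable rel ar k {as. length as = k \<and> (\<exists>Q \<in> Pc. set as \<subseteq> Q)}"
    and P_in: "P \<in> Pc"
    and P_nontriv: "nontrivial (pent_L P (binrel rel sa \<inter> P \<times> P) (binrel rel sb \<inter> P \<times> P)
                                          (binrel rel sg \<inter> P \<times> P))"
    and P_max: "\<forall>Q \<in> Pc. Q \<noteq> P \<longrightarrow> \<not> P \<subseteq> Q"
  shows "linear_reduction
           pent_wf pent_vars
           (pent_assign P (binrel rel sb \<inter> P \<times> P) (binrel rel sg \<inter> P \<times> P))
           (pent_sat P (binrel rel sa \<inter> P \<times> P) (binrel rel sb \<inter> P \<times> P) (binrel rel sg \<inter> P \<times> P))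
           (pent_dist P (binrel rel sa \<inter> P \<times> P) (binrel rel sb \<inter> P \<times> P) (binrel rel sg \<inter> P \<times> P))
           (csp_wf ar) cvars (\<lambda>_ _. True) (csp_sat rel) (csp_dist rel)"
proof -
  have pent: "is_pentagon P (binrel rel sa \<inter> P \<times> P) (binrel rel sb \<inter> P \<times> P) (binrel rel sg \<inter> P \<times> P)"
    using pentagons P_in by blast
  then have eqv: "equiv P (binrel rel sa \<inter> P \<times> P)" "equiv P (binrel rel sb \<inter> P \<times> P)"
      "equiv P (binrel rel sg \<inter> P \<times> P)" and "finite P"
    unfolding is_pentagon_def by auto
  obtain p p' where pp: "p \<in> P" "p' \<in> P" "p \<noteq> p'"
    using pent_L_nontrivial_imp_two_points[OF eqv P_nontriv] .
  obtain ps where ps: "set ps = P" using finite_list[OF \<open>finite P\<close>] ..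
  with pp have "ps \<noteq> []" by auto
  then have "\<forall>I. \<exists>cs. pp_encodes rel ar {as. length as = length (pp_scope (length ps) I) \<and> (\<exists>Q \<in> Pc. set as \<subseteq> Q)}
                 (pp_scope (length ps) I) cs"
    using common_pentagon_pp_encodes[OF ppdef P_in pp] by (simp add: Suc_le_eq)
  then obtain pp_cs where "\<forall>I. pp_encodes rel ar {as. length as = length (pp_scope (length ps) I) \<and> (\<exists>Q \<in> Pc. set as \<subseteq> Q)}
                 (pp_scope (length ps) I) (pp_cs I)"
    by (auto dest: choice)
  then have "pentagon_reduction rel ar sa sb sg Pc P ps pp_cs"
    using ar_a ar_b ar_g pent P_in P_max ps \<open>ps \<noteq> []\<close> by unfold_locales auto
  then show ?thesis by (rule pentagon_reduction.linear_reduction_to_csp)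
qed

end
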